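(* Let the multiplicity sequence $\Lambda=\{\lambda_n,\mu_n\}_{n=1}^{\infty}$ be an interpolating variety for $A^0_{|z|}$. Then for every $\epsilon>0$ there is a constant $m_\epsilon>0$, independent of $n$, such that \[ \inf_{k\ne n}|\lambda_n-\lambda_k|\ge m_\epsilon\exp\Big\{-\frac{\epsilon|\lambda_n|}{\mu_n}\Big\}\qquad\text{for all } n\in\mathbb{N}. \]
   Context: A multiplicity sequence $\Lambda=\{\lambda_n,\mu_n\}_{n=1}^\infty$ consists of distinct nonzero complex numbers $\lambda_n$ with $|\lambda_n|\to\infty$, $|\lambda_n|\le|\lambda_{n+1}|$, and positive integers $\mu_n$. $A^0_{|z|}$ is the space of entire functions $F$ with: for every $\epsilon>0$ there is $M_\epsilon$ with $|F(z)|\le M_\epsilon e^{\epsilon|z|}$ on $\mathbb{C}$. $\Lambda$ is an interpolating variety for $A^0_{|z|}$ if for every doubly indexed complex sequence $(a_{n,k})_{n\in\mathbb{N},0\le k\le\mu_n-1}$ with $\sup_n\sum_{k}|a_{n,k}|e^{-\epsilon|\lambda_n|}<\infty$ for every $\epsilon>0$ there is $f\in A^0_{|z|}$ with $f^{(k)}(\lambda_n)/k!=a_{n,k}$ for all $n,k$. *)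

theory Defs
  imports "HOL-Analysis.Analysis"
begin

text \<open>Multiplicity sequence, indexed from 0 instead of 1.\<close>
definition multiplicity_sequence :: "(nat \<Rightarrow> complex) \<Rightarrow> (nat \<Rightarrow> nat) \<Rightarrow> bool" where
  "multiplicity_sequence lam mu \<longleftrightarrow>
     inj lam \<and> (\<forall>n. lam n \<noteq> 0) \<and> (\<forall>n. norm (lam n) \<le> norm (lam (Suc n))) \<and>
     filterlim (\<lambda>n. norm (lam n)) at_top sequentially \<and> (\<forall>n. mu n \<ge> 1)"

definition A0 :: "(complex \<Rightarrow> complex) set" where
  "A0 = {F. F holomorphic_on UNIV \<and>
            (\<forall>\<epsilon>>0. \<exists>M. \<forall>z. norm (F z) \<le> M * exp (\<epsilon> * norm z))}"

definition interpolating_variety_A0 :: "(nat \<Rightarrow> complex) \<Rightarrow> (nat \<Rightarrow> nat) \<Rightarrow> bool" where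
  "interpolating_variety_A0 lam mu \<longleftrightarrow>
     (\<forall>a :: nat \<Rightarrow> nat \<Rightarrow> complex.
        (\<forall>\<epsilon>>0. bdd_above (range (\<lambda>n. (\<Sum>k<mu n. norm (a n k)) * exp (- \<epsilon> * norm (lam n)))))
        \<longrightarrow> (\<exists>f\<in>A0. \<forall>n. \<forall>k<mu n. (deriv ^^ k) f (lam n) / of_nat (fact k) = a n k))"

end

theory Submission
  imports Defs "HOL-Complex_Analysis.Complex_Analysis"
begin

text \<open>
  If the bound failed for some \<open>\<epsilon> > 0\<close>, there would be pairs \<open>n \<noteq> k\<close>, arbitrarily far out, with
  \<open>|\<lambda>\<^sub>n - \<lambda>\<^sub>k| < exp (-\<epsilon> |\<lambda>\<^sub>n| / \<mu>\<^sub>n) / (j + 1)\<close> for each \<open>j\<close>; choose one such pair for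
  every \<open>j\<close> so that all indices are distinct. Interpolate the bounded data "value 1 at each
  \<open>\<lambda>\<^sub>k\<close>, a zero of order \<open>\<mu>\<^sub>n\<close> at each \<open>\<lambda>\<^sub>n\<close>" by some \<open>f\<close> with \<open>|f z| \<le> M exp (\<epsilon> |z|)\<close>.
  Cauchy's estimates on the circle of radius 2 about \<open>\<lambda>\<^sub>n\<close> show that near \<open>\<lambda>\<^sub>n\<close>
  \<open>|f z| \<le> 2 M exp (\<epsilon> (|\<lambda>\<^sub>n| + 2)) |z - \<lambda>\<^sub>n|^\<mu>\<^sub>n\<close>, so \<open>1 = |f \<lambda>\<^sub>k| \<le> 2 M exp (2 \<epsilon>) / (j + 1)\<close>,
  which is false for large \<open>j\<close>.
\<close>

lemma norm_le_near_zero_of_order: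
  fixes f :: "complex \<Rightarrow> complex"
  assumes holf: "f holomorphic_on ball a R" and contf: "continuous_on (cball a R) f"
    and bound: "\<And>z. dist a z = R \<Longrightarrow> norm (f z) \<le> B"
    and zero: "\<And>j. j < m \<Longrightarrow> (deriv ^^ j) f a = 0"
    and "0 < R" and near: "2 * dist a w \<le> R"
  shows "norm (f w) \<le> 2 * B * (dist a w / R) ^ m"
proof -
  define t where "t = dist a w / R"
  have t: "0 \<le> t" "t \<le> 1/2" using near \<open>0 < R\<close> by (auto simp: t_def field_simps)
  have "0 \<le> B"
    using order_trans[OF norm_ge_zero bound[of "a + of_real R"]] \<open>0 < R\<close> by (simp add: dist_norm)
  define c where "c j = (deriv ^^ j) f a / fact j * (w - a) ^ j" for j
  have "c sums f w"
    unfolding c_def by (rule holomorphic_power_series[OF holf]) (use near \<open>0 < R\<close> in auto)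
  moreover have "(\<Sum>i<m. c i) = 0" using zero by (simp add: c_def)
  ultimately have tail: "(\<lambda>i. c (i + m)) sums f w" using sums_iff_shift'[of c m] by simp
  have coeff: "norm (c j) \<le> B * t ^ j" for j
  proof -
    have "norm (c j) = norm ((deriv ^^ j) f a) / fact j * dist a w ^ j"
      by (simp add: c_def norm_divide norm_mult norm_power dist_norm norm_minus_commute)
    also have "\<dots> \<le> (fact j * B / R ^ j) / fact j * dist a w ^ j"
      by (intro mult_right_mono divide_right_mono Cauchy_inequality[OF holf contf \<open>0 < R\<close>])
        (auto simp: dist_norm intro: bound)
    also have "\<dots> = B * t ^ j" by (simp add: t_def power_divide)
    finally show ?thesis .
  qed
  have "norm (c (i + m)) \<le> B * t ^ m * (1/2) ^ i" for i
  proof -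
    have "B * t ^ (i + m) = B * t ^ m * t ^ i" by (simp add: power_add)
    also have "\<dots> \<le> B * t ^ m * (1/2) ^ i"
      using t \<open>0 \<le> B\<close> by (intro mult_left_mono power_mono) auto
    finally show ?thesis using coeff[of "i + m"] by linarith
  qed
  moreover have "summable (\<lambda>i. B * t ^ m * (1/2::real) ^ i)"
    by (intro summable_mult summable_geometric) simp
  ultimately have "norm (f w) \<le> (\<Sum>i. B * t ^ m * (1/2) ^ i)"
    using sums_unique[OF tail] norm_suminf_le by metis
  also have "\<dots> = 2 * B * t ^ m"
    using suminf_mult[of "\<lambda>i. (1/2::real) ^ i" "B * t ^ m"] suminf_geometric[of "1/2::real"]
    by (simp add: summable_geometric)
  finally show ?thesis by (simp add: t_def)
qed

lemma entire_norm_le_near_zero_of_order: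
  fixes f :: "complex \<Rightarrow> complex"
  assumes holf: "f holomorphic_on UNIV"
    and growth: "\<And>z. norm (f z) \<le> M * exp (\<epsilon> * norm z)"
    and zero: "\<And>j. j < m \<Longrightarrow> (deriv ^^ j) f a = 0"
    and "0 \<le> \<epsilon>" "1 \<le> m" "c \<le> 1"
    and close: "dist a b \<le> c * exp (- \<epsilon> * norm a / m)"
  shows "norm (f b) \<le> 2 * M * exp (2 * \<epsilon>) * c"
proof -
  have "0 \<le> M" using order_trans[OF norm_ge_zero growth[of 0]] by simp
  have "0 \<le> c * exp (- \<epsilon> * norm a / m)" using zero_le_dist close by (rule order_trans)
  then have "0 \<le> c" by (simp add: zero_le_mult_iff)
  have decay: "exp (- \<epsilon> * norm a / m) \<le> 1"
    using \<open>0 \<le> \<epsilon>\<close> by (simp add: divide_nonpos_nonneg)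
  have sphere: "norm (f z) \<le> M * exp (\<epsilon> * (norm a + 2))" if "dist a z = 2" for z
  proof -
    have "norm z \<le> norm a + 2"
      using that norm_triangle_ineq2[of z a] by (simp add: dist_norm norm_minus_commute)
    then have "exp (\<epsilon> * norm z) \<le> exp (\<epsilon> * (norm a + 2))"
      using \<open>0 \<le> \<epsilon>\<close> by (simp add: mult_left_mono)
    then show ?thesis using growth[of z] \<open>0 \<le> M\<close> by (meson mult_left_mono order_trans)
  qed
  have "dist a b \<le> 1" using close mult_le_one[OF \<open>c \<le> 1\<close> _ decay] by simp
  have "(dist a b / 2) ^ m \<le> (c * exp (- \<epsilon> * norm a / m)) ^ m"
    using close zero_le_dist[of a b] by (intro power_mono) linarith+
  also have "\<dots> = c ^ m * exp (- \<epsilon> * norm a)"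
    using \<open>1 \<le> m\<close> by (simp add: power_mult_distrib flip: exp_of_nat_mult)
  also have "\<dots> \<le> c * exp (- \<epsilon> * norm a)"
    using \<open>0 \<le> c\<close> \<open>c \<le> 1\<close> \<open>1 \<le> m\<close> by (simp add: power_le_one power_decreasing[of 1 m c, simplified])
  finally have small: "(dist a b / 2) ^ m \<le> c * exp (- \<epsilon> * norm a)" .
  have "norm (f b) \<le> 2 * (M * exp (\<epsilon> * (norm a + 2))) * (dist a b / 2) ^ m"
  proof (rule norm_le_near_zero_of_order[where R = 2])
    show "f holomorphic_on ball a 2" using holf by (rule holomorphic_on_subset) simp
    show "continuous_on (cball a 2) f"
      using holomorphic_on_imp_continuous_on[OF holf] by (rule continuous_on_subset) simp
    show "2 * dist a b \<le> 2" using \<open>dist a b \<le> 1\<close> by simp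
  qed (use zero sphere in auto)
  also have "\<dots> \<le> 2 * (M * exp (\<epsilon> * (norm a + 2))) * (c * exp (- \<epsilon> * norm a))"
    using small \<open>0 \<le> M\<close> by (intro mult_left_mono) auto
  also have "\<dots> = 2 * M * exp (2 * \<epsilon>) * c"
  proof -
    have "exp (\<epsilon> * (norm a + 2)) * exp (- \<epsilon> * norm a) = exp (2 * \<epsilon>)"
      by (simp flip: exp_add add: algebra_simps)
    then show ?thesis by (simp add: mult_ac)
  qed
  finally show ?thesis .
qed

lemma separated_from_initial_segment:
  fixes lam :: "nat \<Rightarrow> 'a::real_normed_vector"
  assumes inj: "inj lam" and lim: "filterlim (\<lambda>n. norm (lam n)) at_top sequentially"
  shows "\<exists>\<delta>>0. \<forall>k\<le>N. \<forall>n. n \<noteq> k \<longrightarrow> \<delta> \<le> norm (lam n - lam k)"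
proof -
  define R where "R = Max ((\<lambda>k. norm (lam k)) ` {..N})"
  have R: "norm (lam k) \<le> R" if "k \<le> N" for k
    using that by (auto simp: R_def)
  obtain L where L: "\<And>n. n \<ge> L \<Longrightarrow> R + 1 \<le> norm (lam n)"
    using lim by (auto simp: filterlim_at_top eventually_sequentially)
  define D where "D = (\<lambda>(n, k). norm (lam n - lam k)) ` {p \<in> {..<L} \<times> {..N}. fst p \<noteq> snd p}"
  define \<delta> where "\<delta> = Min (insert 1 D)"
  have finD: "finite (insert 1 D)" by (simp add: D_def)
  have "\<delta> > 0"
    using finD inj by (auto simp: \<delta>_def D_def Min_gr_iff inj_def)
  moreover have "\<delta> \<le> norm (lam n - lam k)" if "k \<le> N" "n \<noteq> k" for n k
  proof (cases "n < L")
    case True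
    then have "norm (lam n - lam k) \<in> D" using that by (force simp: D_def)
    then show ?thesis using finD by (simp add: \<delta>_def)
  next
    case False
    then have "R + 1 \<le> norm (lam n)" using L by simp
    then have "1 \<le> norm (lam n) - norm (lam k)" using R[OF that(1)] by linarith
    also have "\<dots> \<le> norm (lam n - lam k)" by (rule norm_triangle_ineq2)
    finally have "1 \<le> norm (lam n - lam k)" .
    moreover have "\<delta> \<le> 1" unfolding \<delta>_def using finD by (rule Min_le) simp
    ultimately show ?thesis by linarith
  qed
  ultimately show ?thesis by blast
qed

lemma close_pairs_beyond:
  fixes lam :: "nat \<Rightarrow> 'a::real_normed_vector" and E :: "nat \<Rightarrow> real"
  assumes "inj lam" "filterlim (\<lambda>n. norm (lam n)) at_top sequentially"
    and E_le_1: "\<And>n. E n \<le> 1"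
    and not_sep: "\<not> (\<exists>m>0. \<forall>n. (INF k\<in>{k. k \<noteq> n}. norm (lam n - lam k)) \<ge> m * E n)"
    and "0 < c"
  shows "\<exists>n k. N < n \<and> N < k \<and> n \<noteq> k \<and> norm (lam n - lam k) < c * E n"
proof -
  obtain \<delta> where "\<delta> > 0" and sep: "\<And>k n. k \<le> N \<Longrightarrow> n \<noteq> k \<Longrightarrow> \<delta> \<le> norm (lam n - lam k)"
    using separated_from_initial_segment[OF assms(1,2), of N] by auto
  \<comment> \<open>\<open>m \<le> \<delta>\<close> keeps the pair away from the indices \<open>\<le> N\<close>, and \<open>m \<le> c\<close> gives the bound.\<close>
  define m where "m = min \<delta> c"
  have "m > 0" using \<open>\<delta> > 0\<close> \<open>0 < c\<close> by (simp add: m_def)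
  then obtain n where below: "(INF k\<in>{k. k \<noteq> n}. norm (lam n - lam k)) < m * E n"
    using not_sep by (meson not_le)
  have "(\<lambda>k. norm (lam n - lam k)) ` {k. k \<noteq> n} \<noteq> {}"
    by (auto intro: exI[of _ "Suc n"])
  from cInf_lessD[OF this below] obtain k where "k \<noteq> n" and close: "norm (lam n - lam k) < m * E n"
    by blast
  have "0 < m * E n" using norm_ge_zero close by (rule order_le_less_trans)
  then have "0 < E n" using \<open>m > 0\<close> by (simp add: zero_less_mult_iff)
  have "m * E n \<le> m" using E_le_1[of n] \<open>m > 0\<close> by (simp add: mult_left_le)
  then have "norm (lam n - lam k) < \<delta>" using close by (simp add: m_def)
  then have "N < n \<and> N < k"
    using sep[of n k] sep[of k n] \<open>k \<noteq> n\<close> by (auto simp: norm_minus_commute not_less[symmetric])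
  moreover have "m * E n \<le> c * E n"
    using \<open>0 < E n\<close> by (intro mult_right_mono) (simp_all add: m_def)
  then have "norm (lam n - lam k) < c * E n" using close by linarith
  ultimately show ?thesis using \<open>k \<noteq> n\<close> by blast
qed

lemma disjoint_pair_sequence:
  assumes "\<And>j N. \<exists>n k. N < n \<and> N < k \<and> P j n k"
  shows "\<exists>n k :: nat \<Rightarrow> nat. (\<forall>j. P j (n j) (k j)) \<and> (\<forall>i j. i \<noteq> j \<longrightarrow> n i \<noteq> k j)"
proof -
  have "\<exists>s. \<forall>j. P j (fst (s j)) (snd (s j)) \<and>
      max (fst (s j)) (snd (s j)) < min (fst (s (Suc j))) (snd (s (Suc j)))"
  proof (rule dependent_nat_choice)
    show "\<exists>p. P 0 (fst p) (snd p)" using assms[of 0 0] by auto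
    fix p :: "nat \<times> nat" and j
    obtain n k where "max (fst p) (snd p) < n" "max (fst p) (snd p) < k" "P (Suc j) n k"
      using assms by blast
    then show "\<exists>q. P (Suc j) (fst q) (snd q) \<and> max (fst p) (snd p) < min (fst q) (snd q)"
      by (intro exI[of _ "(n, k)"]) simp
  qed
  then obtain s where s: "\<And>j. P j (fst (s j)) (snd (s j))"
    and beyond: "\<And>j. max (fst (s j)) (snd (s j)) < min (fst (s (Suc j))) (snd (s (Suc j)))"
    by blast
  define hi where "hi j = max (fst (s j)) (snd (s j))" for j
  define lo where "lo j = min (fst (s j)) (snd (s j))" for j
  have "hi j < hi (Suc j)" for j using beyond[of j] by (simp add: hi_def less_max_iff_disj)
  then have "mono hi" by (simp add: mono_iff_le_Suc less_imp_le)
  have before: "hi i < lo j" if "i < j" for i j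
  proof -
    obtain j' where j': "j = Suc j'" using \<open>i < j\<close> less_imp_Suc_add by blast
    then have "hi i \<le> hi j'" using \<open>i < j\<close> \<open>mono hi\<close> by (simp add: monoD)
    also have "\<dots> < lo j" using beyond[of j'] by (simp add: hi_def lo_def j')
    finally show ?thesis .
  qed
  have "fst (s i) \<noteq> snd (s j)" if "i \<noteq> j" for i j
    using that before[of i j] before[of j i] by (cases "i < j") (auto simp: hi_def lo_def)
  then show ?thesis
    using s by (intro exI[of _ "\<lambda>j. fst (s j)"] exI[of _ "\<lambda>j. snd (s j)"]) simp
qed

lemma disjoint_close_pairs:
  fixes lam :: "nat \<Rightarrow> 'a::real_normed_vector" and E :: "nat \<Rightarrow> real"
  assumes "inj lam" "filterlim (\<lambda>n. norm (lam n)) at_top sequentially"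
    and "\<And>n. E n \<le> 1"
    and "\<not> (\<exists>m>0. \<forall>n. (INF k\<in>{k. k \<noteq> n}. norm (lam n - lam k)) \<ge> m * E n)"
  shows "\<exists>nn kk :: nat \<Rightarrow> nat. (\<forall>j. norm (lam (nn j) - lam (kk j)) < E (nn j) / (real j + 1))
           \<and> (\<forall>i j. nn i \<noteq> kk j)"
proof -
  have "\<exists>n k. N < n \<and> N < k \<and> n \<noteq> k \<and> norm (lam n - lam k) < 1 / (real j + 1) * E n" for j N
    by (rule close_pairs_beyond[OF assms]) simp
  from disjoint_pair_sequence[where P = "\<lambda>j n k. n \<noteq> k \<and> norm (lam n - lam k) < 1 / (real j + 1) * E n", OF this]
  obtain nn kk
    where close: "\<And>j. nn j \<noteq> kk j \<and> norm (lam (nn j) - lam (kk j)) < 1 / (real j + 1) * E (nn j)"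
      and disjoint: "\<And>i j. i \<noteq> j \<Longrightarrow> nn i \<noteq> kk j"
    by auto
  have "nn i \<noteq> kk j" for i j using close disjoint by (cases "i = j") auto
  then show ?thesis using close by (intro exI[of _ nn] exI[of _ kk]) simp
qed

lemma interpolating_variety_A0_bounded_data:
  assumes "interpolating_variety_A0 lam mu" and bounded: "\<And>n. (\<Sum>k<mu n. norm (a n k)) \<le> C"
  shows "\<exists>f\<in>A0. \<forall>n. \<forall>k<mu n. (deriv ^^ k) f (lam n) / of_nat (fact k) = a n k"
proof -
  have "(\<Sum>k<mu n. norm (a n k)) * exp (- \<epsilon> * norm (lam n)) \<le> C" if "\<epsilon> > 0" for \<epsilon> n
  proof -
    have "exp (- \<epsilon> * norm (lam n)) \<le> 1" using that by simp
    then have "(\<Sum>k<mu n. norm (a n k)) * exp (- \<epsilon> * norm (lam n)) \<le> (\<Sum>k<mu n. norm (a n k))"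
      by (rule mult_left_le) (simp add: sum_nonneg)
    then show ?thesis using bounded[of n] by linarith
  qed
  then have "\<forall>\<epsilon>>0. bdd_above (range (\<lambda>n. (\<Sum>k<mu n. norm (a n k)) * exp (- \<epsilon> * norm (lam n))))"
    by (meson bdd_aboveI2)
  then show ?thesis using assms(1) unfolding interpolating_variety_A0_def by blast
qed

lemma interpolating_variety_A0_indicator:
  assumes "interpolating_variety_A0 lam mu" and "\<And>n. n \<in> T \<Longrightarrow> 0 < mu n"
  shows "\<exists>f\<in>A0. (\<forall>n\<in>T. f (lam n) = 1) \<and> (\<forall>n. n \<notin> T \<longrightarrow> (\<forall>l<mu n. (deriv ^^ l) f (lam n) = 0))"
proof -
  define a where "a n l = (if n \<in> T \<and> l = 0 then 1 else 0 :: complex)" for n and l :: nat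
  have "(\<Sum>l<mu n. norm (a n l)) \<le> 1" for n
  proof -
    have "(\<Sum>l<mu n. norm (a n l)) \<le> (\<Sum>l<mu n. if l = 0 then 1 else 0)"
      by (intro sum_mono) (simp add: a_def)
    also have "\<dots> \<le> 1" by (simp add: sum.delta)
    finally show ?thesis .
  qed
  then obtain f where "f \<in> A0"
    and interp: "\<And>n l. l < mu n \<Longrightarrow> (deriv ^^ l) f (lam n) / of_nat (fact l) = a n l"
    using interpolating_variety_A0_bounded_data[OF assms(1)] by blast
  have "f (lam n) = 1" if "n \<in> T" for n
    using interp[of 0 n] assms(2)[OF that] that by (simp add: a_def)
  moreover have "(deriv ^^ l) f (lam n) = 0" if "n \<notin> T" "l < mu n" for n l
    using interp[OF that(2)] that(1) by (simp add: a_def)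
  ultimately show ?thesis using \<open>f \<in> A0\<close> by blast
qed

theorem lemma2p1:
  fixes lam :: "nat \<Rightarrow> complex" and mu :: "nat \<Rightarrow> nat"
  assumes "multiplicity_sequence lam mu"
    and "interpolating_variety_A0 lam mu"
  shows "\<forall>\<epsilon>>0. \<exists>m>0. \<forall>n.
           (INF k\<in>{k. k \<noteq> n}. norm (lam n - lam k)) \<ge> m * exp (- \<epsilon> * norm (lam n) / real (mu n))"
proof (intro allI impI)
  fix \<epsilon> :: real assume "\<epsilon> > 0"
  have inj: "inj lam" and lim: "filterlim (\<lambda>n. norm (lam n)) at_top sequentially"
    and mu: "\<And>n. 1 \<le> mu n"
    using assms(1) by (auto simp: multiplicity_sequence_def)
  define E where "E n = exp (- \<epsilon> * norm (lam n) / real (mu n))" for n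
  show "\<exists>m>0. \<forall>n. (INF k\<in>{k. k \<noteq> n}. norm (lam n - lam k)) \<ge> m * E n"
  proof (rule ccontr)
    assume not_sep: "\<not> ?thesis"
    have "E n \<le> 1" for n using \<open>\<epsilon> > 0\<close> by (simp add: E_def divide_nonpos_nonneg)
    from disjoint_close_pairs[OF inj lim this not_sep] obtain nn kk
      where close: "\<And>j. norm (lam (nn j) - lam (kk j)) < E (nn j) / (real j + 1)"
        and not_kk: "\<And>j. nn j \<notin> range kk"
      by blast
    have "0 < mu n" for n using mu[of n] by simp
    from interpolating_variety_A0_indicator[OF assms(2) this]
    obtain f where "f \<in> A0" and one: "\<forall>n\<in>range kk. f (lam n) = 1"
      and vanish: "\<forall>n. n \<notin> range kk \<longrightarrow> (\<forall>l<mu n. (deriv ^^ l) f (lam n) = 0)"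
      by blast
    obtain M where growth: "\<And>z. norm (f z) \<le> M * exp (\<epsilon> * norm z)"
      using \<open>f \<in> A0\<close> \<open>\<epsilon> > 0\<close> by (auto simp: A0_def)
    obtain j :: nat where j: "2 * M * exp (2 * \<epsilon>) < real j + 1"
      using reals_Archimedean2 less_add_one order_less_trans by blast
    have "(deriv ^^ l) f (lam (nn j)) = 0" if "l < mu (nn j)" for l
      using vanish not_kk that by blast
    then have "norm (f (lam (kk j))) \<le> 2 * M * exp (2 * \<epsilon>) * (1 / (real j + 1))"
      using \<open>f \<in> A0\<close> close[of j] \<open>\<epsilon> > 0\<close> mu[of "nn j"]
      by (intro entire_norm_le_near_zero_of_order[OF _ growth]) (auto simp: A0_def E_def dist_norm)
    then show False using one j by (simp add: field_simps)
  qed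
qed

end
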